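(* Let $f$ and $g$ be completely multiplicative functions with $|f(n)|,|g(n)|\le1$ for all $n$, suppose $\mathbb{D}_\beta(f,g)<\infty$ for some $\beta>0$, and let $h$ be defined by $g=f*h$. Then the series $\sum_{n=1}^\infty\frac{|h(n)|^2}{n^\beta}$ is convergent.
   Context: $(f*h)(n)=\sum_{dm=n}f(d)h(m)$. $\mathbb{D}_\beta(f,g)^2:=\sum_p \frac{1-\Re(f(p)\overline{g(p)})}{p^\beta}$ (sum over primes). *)

theory Defs
  imports "HOL-Analysis.Analysis" "HOL-Computational_Algebra.Primes"
begin

text \<open>Arithmetic functions are maps nat => complex; only arguments n >= 1 matter.\<close>

definition completely_multiplicative :: "(nat \<Rightarrow> complex) \<Rightarrow> bool" where
  "completely_multiplicative f \<longleftrightarrow>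
     f 1 = 1 \<and> (\<forall>m n. m > 0 \<longrightarrow> n > 0 \<longrightarrow> f (m * n) = f m * f n)"

definition dirichlet_conv :: "(nat \<Rightarrow> complex) \<Rightarrow> (nat \<Rightarrow> complex) \<Rightarrow> nat \<Rightarrow> complex" where
  "dirichlet_conv f h n = (\<Sum>d | d dvd n. f d * h (n div d))"

text \<open>The summand of D_beta(f,g)^2 at a prime p.\<close>
definition pretent_term :: "real \<Rightarrow> (nat \<Rightarrow> complex) \<Rightarrow> (nat \<Rightarrow> complex) \<Rightarrow> nat \<Rightarrow> real" where
  "pretent_term \<beta> f g p = (1 - Re (f p * cnj (g p))) / real p powr \<beta>"

definition pretent_dist_finite :: "real \<Rightarrow> (nat \<Rightarrow> complex) \<Rightarrow> (nat \<Rightarrow> complex) \<Rightarrow> bool" where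
  "pretent_dist_finite \<beta> f g \<longleftrightarrow> pretent_term \<beta> f g summable_on {p. prime p}"

end

theory Submission
  imports Defs
begin

text \<open>
  Since \<open>f\<close> and \<open>g\<close> are multiplicative, so is \<open>h\<close>, and comparing \<open>g(p)\<^sup>n = \<Sum>\<^sub>j f(p)\<^sup>j h(p\<^sup>n\<^sup>-\<^sup>j)\<close> at
  consecutive \<open>n\<close> gives \<open>h(p\<^sup>k\<^sup>+\<^sup>1) = g(p)\<^sup>k (g(p) - f(p))\<close>.  Hence
  \<open>|h(p\<^sup>k\<^sup>+\<^sup>1)|\<^sup>2 \<le> |g(p) - f(p)|\<^sup>2 \<le> 2 (1 - Re (f(p) cnj g(p)))\<close>, and the local Euler factor of
  \<open>|h(n)|\<^sup>2 / n\<^sup>\<beta>\<close> at \<open>p\<close> is at most \<open>1 + C (1 - Re (f(p) cnj g(p))) / p\<^sup>\<beta>\<close> with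
  \<open>C = 2 / (1 - 2\<^sup>-\<^sup>\<beta>)\<close>.  Every finite partial sum of the nonnegative multiplicative
  series is bounded by the product of these local factors, hence by \<open>exp (C \<D>\<^sub>\<beta>(f,g)\<^sup>2)\<close>.
\<close>

subsection \<open>Multiplicativity of a Dirichlet quotient\<close>

lemma divisors_mult_eq_image:
  fixes a b :: nat
  shows "{d. d dvd a * b} = (\<lambda>(x, y). x * y) ` ({x. x dvd a} \<times> {y. y dvd b})"
proof
  show "{d. d dvd a * b} \<subseteq> (\<lambda>(x, y). x * y) ` ({x. x dvd a} \<times> {y. y dvd b})"
  proof
    fix d assume "d \<in> {d. d dvd a * b}"
    then obtain x y where "d = x * y" "x dvd a" "y dvd b"
      using division_decomp[of d a b] by auto
    then show "d \<in> (\<lambda>(x, y). x * y) ` ({x. x dvd a} \<times> {y. y dvd b})" by auto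
  qed
qed (auto intro: mult_dvd_mono)

lemma gcd_mult_divisors_coprime:
  fixes a b x y :: nat
  assumes "coprime a b" "x dvd a" "y dvd b"
  shows "gcd (x * y) a = x"
  by (metis assms coprime_mult_right_iff dvd_mult_div_cancel
      gcd_mult_left_right_cancel gcd_nat.order_iff)

lemma inj_on_mult_divisors_coprime:
  fixes a b :: nat
  assumes "coprime a b"
  shows "inj_on (\<lambda>(x, y). x * y) ({x. x dvd a} \<times> {y. y dvd b})"
proof (rule inj_onI, clarsimp)
  fix x y x' y' assume *: "x dvd a" "y dvd b" "x' dvd a" "y' dvd b" "x * y = x' * y'"
  have "x = x'"
    using gcd_mult_divisors_coprime[OF assms *(1,2)] gcd_mult_divisors_coprime[OF assms *(3,4)] *(5)
    by simp
  moreover have "y = y'"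
    using gcd_mult_divisors_coprime[of b a y x] gcd_mult_divisors_coprime[of b a y' x'] * assms
    by (metis coprime_commute mult.commute)
  ultimately show "x = x' \<and> y = y'" by simp
qed

lemma sum_divisors_mult_coprime:
  fixes a b :: nat and F :: "nat \<Rightarrow> 'c::comm_monoid_add"
  assumes "coprime a b"
  shows "(\<Sum>d | d dvd a * b. F d) = (\<Sum>(x, y) \<in> {x. x dvd a} \<times> {y. y dvd b}. F (x * y))"
  unfolding divisors_mult_eq_image[of a b]
  by (subst sum.reindex[OF inj_on_mult_divisors_coprime[OF assms]]) (simp add: case_prod_unfold)

lemma coprime_cofactors_less:
  fixes a b x y :: nat
  assumes "coprime a b" "0 < a" "0 < b" "x dvd a" "y dvd b" "(x, y) \<noteq> (1, 1)"
  shows "coprime (a div x) (b div y)" "a div x * (b div y) < a * b"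
proof -
  have ab: "a = x * (a div x)" "b = y * (b div y)" using assms by auto
  then show "coprime (a div x) (b div y)"
    using assms(1) coprime_mult_left_iff coprime_mult_right_iff by metis
  from ab have pos: "x > 0" "y > 0" "a div x > 0" "b div y > 0"
    using assms by (metis nat_0_less_mult_iff)+
  moreover have "x * y \<noteq> 1" using assms(6) by simp
  ultimately have "x * y > 1" by (metis nat_0_less_mult_iff nat_neq_iff less_one)
  then show "a div x * (b div y) < a * b"
    using pos by (subst (2) ab(1), subst (2) ab(2)) (simp add: algebra_simps)
qed

lemma dirichlet_quotient_one:
  assumes "f 1 = 1" "g 1 = 1" "g 1 = dirichlet_conv f h 1"
  shows "h 1 = 1"
  using assms by (simp add: dirichlet_conv_def)

lemma dirichlet_quotient_multiplicative:
  fixes f g h :: "nat \<Rightarrow> complex"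
  assumes f1: "f 1 = 1" and f_mult: "\<And>a b. coprime a b \<Longrightarrow> f (a * b) = f a * f b"
    and g1: "g 1 = 1" and g_mult: "\<And>a b. coprime a b \<Longrightarrow> g (a * b) = g a * g b"
    and conv: "\<And>n. n > 0 \<Longrightarrow> g n = dirichlet_conv f h n"
  shows "coprime a b \<Longrightarrow> h (a * b) = h a * h b"
proof (induction "a * b" arbitrary: a b rule: less_induct)
  case (less a b)
  have h1: "h 1 = 1" using dirichlet_quotient_one[of f g h, OF f1 g1] conv[of 1] by simp
  consider "a = 0 \<or> b = 0" | "a > 0" "b > 0" by blast
  then show ?case
  proof cases
    case 1
    with less.prems h1 show ?thesis by auto
  next
    case 2
    define D where "D = {x. x dvd a} \<times> {y. y dvd b}"
    define S where "S = (\<lambda>(x, y). f x * f y * h (a div x * (b div y)))"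
    define T where "T = (\<lambda>(x, y). f x * f y * (h (a div x) * h (b div y)))"
    have D_finite: "finite D" and one_in_D: "(1, 1) \<in> D"
      using 2 by (simp_all add: D_def)
    have "g (a * b) = sum S D"
    proof -
      have "g (a * b) = (\<Sum>(x, y) \<in> D. f (x * y) * h (a * b div (x * y)))"
        using conv[of "a * b"] less.prems 2
        by (simp add: dirichlet_conv_def D_def sum_divisors_mult_coprime)
      also have "\<dots> = sum S D"
      proof (intro sum.cong refl, clarsimp simp: S_def D_def)
        fix x y assume "x dvd a" "y dvd b"
        moreover from this less.prems have "coprime x y"
          using coprime_imp_coprime dvd_trans by blast
        ultimately show "f (x * y) * h (a * b div (x * y)) = f x * f y * h (a div x * (b div y))"
          by (simp add: f_mult div_mult_div_if_dvd)
      qed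
      finally show ?thesis .
    qed
    moreover have "g a * g b = sum T D"
      using conv[of a] conv[of b] 2
      by (simp add: dirichlet_conv_def D_def T_def sum_product sum.cartesian_product
          case_prod_unfold algebra_simps)
    moreover have "S d = T d" if "d \<in> D - {(1, 1)}" for d
    proof -
      obtain x y where "d = (x, y)" by (cases d)
      with that have d: "d = (x, y)" "x dvd a" "y dvd b" "(x, y) \<noteq> (1, 1)"
        by (auto simp: D_def)
      have "a div x * (b div y) < a * b" "coprime (a div x) (b div y)"
        using coprime_cofactors_less[OF less.prems 2 d(2-4)] by auto
      then show ?thesis using less.hyps d(1) by (simp add: S_def T_def)
    qed
    ultimately have "S (1, 1) = T (1, 1)"
      using g_mult[OF less.prems] sum.remove[OF D_finite one_in_D, of S]
        sum.remove[OF D_finite one_in_D, of T] sum.cong[of "D - {(1, 1)}" _ S T]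
      by simp
    then show ?thesis using f1 by (simp add: S_def T_def)
  qed
qed

subsection \<open>Completely multiplicative functions and the quotient at prime powers\<close>

lemma completely_multiplicative_1:
  "completely_multiplicative f \<Longrightarrow> f 1 = 1"
  by (simp add: completely_multiplicative_def)

lemma completely_multiplicative_mult_coprime:
  assumes "completely_multiplicative f" "coprime a b"
  shows "f (a * b) = f a * f b"
proof -
  from assms(2) consider "a = 0" "b = 1" | "a = 1" "b = 0" | "a > 0" "b > 0"
    by (cases "a = 0"; cases "b = 0") auto
  then show ?thesis
    by cases (use assms(1) completely_multiplicative_1 in \<open>auto simp: completely_multiplicative_def\<close>)
qed

lemma completely_multiplicative_power:
  assumes "completely_multiplicative f" "m > 0"
  shows "f (m ^ j) = f m ^ j"
  using assms by (induction j) (auto simp: completely_multiplicative_def)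

lemma dirichlet_conv_prime_power:
  fixes f h :: "nat \<Rightarrow> complex"
  assumes "completely_multiplicative f" and p: "prime p"
  shows "dirichlet_conv f h (p ^ n) = (\<Sum>j\<le>n. f p ^ j * h (p ^ (n - j)))"
proof -
  have p1: "p > 1" using p prime_gt_1_nat by blast
  have "{d. d dvd p ^ n} = (\<lambda>j. p ^ j) ` {..n}"
    using divides_primepow_nat[OF p] by auto
  moreover have "inj_on (\<lambda>j. p ^ j) {..n}"
    using p1 by (auto intro!: inj_onI simp: power_inject_exp)
  ultimately show ?thesis
    unfolding dirichlet_conv_def
    using p1 by (simp add: sum.reindex completely_multiplicative_power[OF assms(1)] power_diff)
qed

lemma geometric_convolution_quotient:
  fixes a :: "nat \<Rightarrow> 'a::comm_ring_1"
  assumes conv: "\<And>n. (\<Sum>j\<le>n. F ^ j * a (n - j)) = G ^ n"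
  shows "a (Suc n) = G ^ n * (G - F)"
proof -
  have "G ^ Suc n = (\<Sum>j\<le>Suc n. F ^ j * a (Suc n - j))" by (rule conv[symmetric])
  also have "\<dots> = a (Suc n) + F * (\<Sum>j\<le>n. F ^ j * a (n - j))"
    by (subst sum.atMost_Suc_shift) (simp add: sum_distrib_left mult.assoc)
  also have "\<dots> = a (Suc n) + F * G ^ n" by (simp only: conv)
  finally show ?thesis by (simp add: algebra_simps)
qed

lemma dirichlet_quotient_prime_power:
  fixes f g h :: "nat \<Rightarrow> complex"
  assumes cf: "completely_multiplicative f" and cg: "completely_multiplicative g"
    and conv: "\<And>n. n > 0 \<Longrightarrow> g n = dirichlet_conv f h n" and p: "prime p"
  shows "h (p ^ Suc k) = g p ^ k * (g p - f p)"
proof (rule geometric_convolution_quotient)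
  fix n
  have "p > 0" using p prime_gt_0_nat by blast
  then show "(\<Sum>j\<le>n. f p ^ j * h (p ^ (n - j))) = g p ^ n"
    using conv[of "p ^ n"] dirichlet_conv_prime_power[OF cf p]
      completely_multiplicative_power[OF cg] by simp
qed

lemma cmod_diff_squared_le:
  fixes u v :: complex
  assumes "cmod u \<le> 1" "cmod v \<le> 1"
  shows "(cmod (v - u))\<^sup>2 \<le> 2 * (1 - Re (u * cnj v))"
proof -
  have unit_disc: "Re z * Re z + Im z * Im z \<le> 1" if "cmod z \<le> 1" for z
  proof -
    have "Re z * Re z + Im z * Im z = (cmod z)\<^sup>2"
      by (simp only: cmod_power2) (simp add: power2_eq_square)
    also have "\<dots> \<le> 1" using that by (simp add: power_le_one)
    finally show ?thesis .
  qed
  have "Re u * Re u + Im u * Im u \<le> 1" "Re v * Re v + Im v * Im v \<le> 1"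
    using assms by (simp_all add: unit_disc)
  moreover have "(cmod (v - u))\<^sup>2 = (Re v - Re u) * (Re v - Re u) + (Im v - Im u) * (Im v - Im u)"
    by (simp only: cmod_power2) (simp add: power2_eq_square)
  ultimately show ?thesis by (simp add: algebra_simps)
qed

subsection \<open>Euler products of nonnegative multiplicative functions\<close>

definition smooth_upto :: "nat \<Rightarrow> nat \<Rightarrow> nat set" where
  "smooth_upto m N = {n. 0 < n \<and> n \<le> N \<and> (\<forall>q. prime q \<longrightarrow> q dvd n \<longrightarrow> q \<le> m)}"

lemma finite_smooth_upto: "finite (smooth_upto m N)"
  by (rule finite_subset[of _ "{..N}"]) (auto simp: smooth_upto_def)

lemma smooth_upto_0: "smooth_upto 0 N \<subseteq> {1}"
  using prime_factor_nat prime_gt_0_nat by (fastforce simp: smooth_upto_def)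

lemma smooth_upto_Suc_nonprime:
  "\<not> prime (Suc m) \<Longrightarrow> smooth_upto (Suc m) N = smooth_upto m N"
  by (auto simp: smooth_upto_def le_Suc_eq)

lemma not_dvd_smooth_upto:
  "prime (Suc m) \<Longrightarrow> r \<in> smooth_upto m N \<Longrightarrow> \<not> Suc m dvd r"
  by (auto simp: smooth_upto_def)

lemma smooth_upto_Suc_prime:
  assumes p: "prime (Suc m)"
  shows "smooth_upto (Suc m) N \<subseteq> (\<lambda>(k, r). Suc m ^ k * r) ` ({..N} \<times> smooth_upto m N)"
proof
  define p where "p = Suc m"
  have p1: "p > 1" using p prime_gt_1_nat p_def by blast
  fix n assume n: "n \<in> smooth_upto (Suc m) N"
  then have n_pos: "n > 0" and n_le: "n \<le> N" by (auto simp: smooth_upto_def)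
  obtain r where r: "n = p ^ multiplicity p n * r" "\<not> p dvd r"
    using multiplicity_decompose'[of n p] n_pos p1 by auto
  define k where "k = multiplicity p n"
  have n_eq: "n = p ^ k * r" using r(1) by (simp add: k_def)
  have r_pos: "r > 0" using n_eq n_pos by (auto intro: Nat.gr0I)
  have "k < 2 ^ k" by simp
  also have "\<dots> \<le> p ^ k" using p1 by (intro power_mono) auto
  also have "\<dots> \<le> n" unfolding n_eq using r_pos by simp
  finally have "k \<le> N" using n_le by simp
  moreover have "r \<in> smooth_upto m N"
  proof -
    have "r \<le> n" unfolding n_eq using p1 by simp
    moreover have "q \<le> m" if "prime q" "q dvd r" for q
    proof -
      have "q dvd n" unfolding n_eq using that(2) by simp
      then have "q \<le> Suc m" using n that by (auto simp: smooth_upto_def)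
      moreover have "q \<noteq> p" using that r by auto
      ultimately show ?thesis by (simp add: p_def)
    qed
    ultimately show ?thesis using r_pos n_le by (auto simp: smooth_upto_def)
  qed
  ultimately show "n \<in> (\<lambda>(k, r). Suc m ^ k * r) ` ({..N} \<times> smooth_upto m N)"
    using n_eq unfolding p_def by force
qed

lemma inj_on_prime_power_times_coprime:
  fixes p :: nat
  assumes "prime p"
  shows "inj_on (\<lambda>(k, r). p ^ k * r) (UNIV \<times> {r. \<not> p dvd r})"
proof (rule inj_onI, clarsimp)
  fix k r k' r' assume *: "\<not> p dvd r" "\<not> p dvd r'" "p ^ k * r = p ^ k' * r'"
  have p1: "p > 1" using assms prime_gt_1_nat by blast
  have "k = multiplicity p (p ^ k * r)"
    using *(1) p1 by (intro multiplicity_decomposeI[symmetric]) auto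
  also have "\<dots> = k'"
    using *(2,3) p1 by (intro multiplicity_decomposeI) auto
  finally show "k = k' \<and> r = r'" using *(3) p1 by simp
qed

lemma sum_smooth_upto_le_euler_product:
  fixes H :: "nat \<Rightarrow> real"
  assumes nonneg: "\<And>n. H n \<ge> 0" and H1: "H 1 = 1"
    and mult: "\<And>a b. coprime a b \<Longrightarrow> H (a * b) = H a * H b"
  shows "(\<Sum>n\<in>smooth_upto m N. H n) \<le> (\<Prod>p | prime p \<and> p \<le> m. \<Sum>k\<le>N. H (p ^ k))"
proof (induction m)
  case 0
  have "(\<Sum>n\<in>smooth_upto 0 N. H n) \<le> (\<Sum>n\<in>{1}. H n)"
    by (rule sum_mono2[OF _ smooth_upto_0]) (auto simp: nonneg)
  moreover have "{p::nat. prime p \<and> p \<le> 0} = {}" by auto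
  ultimately show ?case using H1 by (simp only: prod.empty) simp
next
  case (Suc m)
  show ?case
  proof (cases "prime (Suc m)")
    case False
    then have "{p. prime p \<and> p \<le> Suc m} = {p. prime p \<and> p \<le> m}"
      by (auto simp: le_Suc_eq)
    with Suc.IH False show ?thesis by (simp add: smooth_upto_Suc_nonprime)
  next
    case True
    define p where "p = Suc m"
    define \<phi> where "\<phi> = (\<lambda>(k, r). p ^ k * r)"
    define D where "D = {..N} \<times> smooth_upto m N"
    have "inj_on \<phi> D"
      unfolding \<phi>_def D_def p_def
      by (rule inj_on_subset[OF inj_on_prime_power_times_coprime[OF True]])
        (auto dest: not_dvd_smooth_upto[OF True])
    have "(\<Sum>n\<in>smooth_upto p N. H n) \<le> (\<Sum>n\<in>\<phi> ` D. H n)"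
      using smooth_upto_Suc_prime[OF True] finite_smooth_upto
      by (intro sum_mono2) (auto simp: nonneg \<phi>_def D_def p_def)
    also have "\<dots> = (\<Sum>(k, r)\<in>D. H (p ^ k) * H r)"
      using \<open>inj_on \<phi> D\<close> True not_dvd_smooth_upto[OF True]
      by (auto simp: sum.reindex \<phi>_def D_def p_def mult prime_imp_coprime coprime_power_left_iff
          intro!: sum.cong)
    also have "\<dots> = (\<Sum>k\<le>N. H (p ^ k)) * (\<Sum>r\<in>smooth_upto m N. H r)"
      by (simp add: D_def sum_product sum.cartesian_product)
    also have "\<dots> \<le> (\<Sum>k\<le>N. H (p ^ k)) * (\<Prod>q | prime q \<and> q \<le> m. \<Sum>k\<le>N. H (q ^ k))"
      using Suc.IH by (intro mult_left_mono) (auto simp: nonneg sum_nonneg)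
    also have "\<dots> = (\<Prod>q | prime q \<and> q \<le> p. \<Sum>k\<le>N. H (q ^ k))"
    proof -
      have "{q. prime q \<and> q \<le> p} = insert p {q. prime q \<and> q \<le> m}"
        using True by (auto simp: p_def le_Suc_eq)
      then show ?thesis by (simp add: p_def)
    qed
    finally show ?thesis by (simp add: p_def)
  qed
qed

lemma multiplicative_summable_on_if_euler_factors_bounded:
  fixes H c :: "nat \<Rightarrow> real"
  assumes nonneg: "\<And>n. H n \<ge> 0" and H1: "H 1 = 1"
    and mult: "\<And>a b. coprime a b \<Longrightarrow> H (a * b) = H a * H b"
    and local_bound: "\<And>p N. prime p \<Longrightarrow> (\<Sum>k\<le>N. H (p ^ k)) \<le> 1 + c p"
    and c_nonneg: "\<And>p. prime p \<Longrightarrow> c p \<ge> 0"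
    and c_summable: "c summable_on {p. prime p}"
  shows "H summable_on {1..}"
proof (rule nonneg_bdd_above_summable_on)
  show "bdd_above (sum H ` {F. F \<subseteq> {1..} \<and> finite F})"
  proof (rule bdd_aboveI2)
    fix F :: "nat set" assume F: "F \<in> {F. F \<subseteq> {1..} \<and> finite F}"
    define N where "N = Max (insert 0 F)"
    define P where "P = {p. prime p \<and> p \<le> N}"
    have "finite P" unfolding P_def by (rule finite_subset[of _ "{..N}"]) auto
    have N_ge: "n \<le> N" if "n \<in> F" for n using F that by (simp add: N_def)
    have "F \<subseteq> smooth_upto N N"
    proof
      fix n assume n: "n \<in> F"
      then have "n > 0" using F by auto
      moreover have "q \<le> N" if "q dvd n" for q
        using dvd_imp_le[OF that \<open>n > 0\<close>] N_ge[OF n] by simp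
      ultimately show "n \<in> smooth_upto N N" using N_ge[OF n] by (simp add: smooth_upto_def)
    qed
    then have "sum H F \<le> (\<Sum>n\<in>smooth_upto N N. H n)"
      by (intro sum_mono2[OF finite_smooth_upto]) (simp_all add: nonneg)
    also have "\<dots> \<le> (\<Prod>p\<in>P. \<Sum>k\<le>N. H (p ^ k))"
      unfolding P_def by (rule sum_smooth_upto_le_euler_product[OF nonneg H1 mult])
    also have "\<dots> \<le> (\<Prod>p\<in>P. exp (c p))"
    proof (rule prod_mono)
      fix p assume "p \<in> P"
      then have "prime p" by (simp add: P_def)
      have "(\<Sum>k\<le>N. H (p ^ k)) \<le> exp (c p)"
        using local_bound[OF \<open>prime p\<close>, of N] exp_ge_add_one_self[of "c p"] by linarith
      then show "0 \<le> (\<Sum>k\<le>N. H (p ^ k)) \<and> (\<Sum>k\<le>N. H (p ^ k)) \<le> exp (c p)"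
        by (simp add: sum_nonneg nonneg)
    qed
    also have "\<dots> = exp (\<Sum>p\<in>P. c p)" using \<open>finite P\<close> by (simp add: exp_sum)
    also have "\<dots> \<le> exp (infsum c {p. prime p})"
      unfolding exp_le_cancel_iff
      by (rule finite_sum_le_infsum[OF c_summable \<open>finite P\<close>]) (auto simp: P_def c_nonneg)
    finally show "sum H F \<le> exp (infsum c {p. prime p})" .
  qed
qed (use nonneg in auto)

subsection \<open>The local factors of \<open>|h(n)|\<^sup>2 / n\<^sup>\<beta>\<close>\<close>

lemma sum_le_one_plus_geometric:
  fixes a :: "nat \<Rightarrow> real"
  assumes "a 0 = 1" "\<And>k. a (Suc k) \<le> A * q ^ Suc k" "0 \<le> A" "0 \<le> q" "q \<le> q0" "q0 < 1"
  shows "(\<Sum>k\<le>N. a k) \<le> 1 + A * q / (1 - q0)"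
proof -
  have "(\<Sum>k\<le>N. a k) = 1 + (\<Sum>k<N. a (Suc k))"
    using assms(1) by (subst sum.atMost_shift) simp
  also have "\<dots> \<le> 1 + A * q * (\<Sum>k<N. q ^ k)"
    using assms(2) by (simp add: sum_mono sum_distrib_left mult.assoc)
  also have "(\<Sum>k<N. q ^ k) \<le> 1 / (1 - q0)"
  proof -
    have "(\<Sum>k<N. q ^ k) = (1 - q ^ N) / (1 - q)" using assms(5,6) by (simp add: sum_gp_strict)
    also have "\<dots> \<le> 1 / (1 - q)" using assms(4-6) by (intro divide_right_mono) auto
    also have "\<dots> \<le> 1 / (1 - q0)" using assms(5,6) by (intro divide_left_mono) auto
    finally show ?thesis .
  qed
  then have "A * q * (\<Sum>k<N. q ^ k) \<le> A * q * (1 / (1 - q0))"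
    using assms(3,4) by (intro mult_left_mono) auto
  finally show ?thesis by simp
qed

lemma pretent_term_nonneg:
  assumes "cmod (f p) \<le> 1" "cmod (g p) \<le> 1"
  shows "pretent_term \<beta> f g p \<ge> 0"
proof -
  have "Re (f p * cnj (g p)) \<le> cmod (f p * cnj (g p))" by (rule complex_Re_le_cmod)
  also have "\<dots> \<le> 1" using assms by (simp add: norm_mult mult_le_one)
  finally show ?thesis by (simp add: pretent_term_def)
qed

lemma dirichlet_quotient_euler_factor_le:
  fixes f g h :: "nat \<Rightarrow> complex" and \<beta> :: real
  assumes cf: "completely_multiplicative f" and cg: "completely_multiplicative g"
    and f_le: "cmod (f p) \<le> 1" and g_le: "cmod (g p) \<le> 1" and \<beta>: "\<beta> > 0"
    and conv: "\<And>n. n > 0 \<Longrightarrow> g n = dirichlet_conv f h n" and p: "prime p"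
  shows "(\<Sum>k\<le>N. (cmod (h (p ^ k)))\<^sup>2 / real (p ^ k) powr \<beta>)
           \<le> 1 + 2 / (1 - 1 / 2 powr \<beta>) * pretent_term \<beta> f g p"
proof -
  define q where "q = 1 / real p powr \<beta>"
  define q0 :: real where "q0 = 1 / 2 powr \<beta>"
  define A where "A = (cmod (g p - f p))\<^sup>2"
  have p_pos: "p > 0" using p prime_gt_0_nat by blast
  have "1 < 2 powr \<beta>" using powr_less_mono2[OF \<beta>, of 1 2] by simp
  moreover have "2 powr \<beta> \<le> real p powr \<beta>"
    using prime_ge_2_nat[OF p] \<beta> by (intro powr_mono2) auto
  ultimately have q: "0 \<le> q" "q \<le> q0" "q0 < 1"
    unfolding q_def q0_def using p_pos by (auto intro!: divide_left_mono mult_pos_pos)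
  have h1: "h 1 = 1"
    using conv[of 1] completely_multiplicative_1[OF cf] completely_multiplicative_1[OF cg]
    by (intro dirichlet_quotient_one[of f g h]) simp_all
  have p_powr: "real (p ^ n) powr \<beta> = (real p powr \<beta>) ^ n" for n
    using p_pos by (simp add: powr_power powr_realpow[symmetric] powr_powr mult.commute)
  have "(cmod (h (p ^ Suc k)))\<^sup>2 / real (p ^ Suc k) powr \<beta> \<le> A * q ^ Suc k" for k
  proof -
    have "cmod (h (p ^ Suc k)) = cmod (g p) ^ k * cmod (g p - f p)"
      by (simp only: dirichlet_quotient_prime_power[OF cf cg conv p]) (simp add: norm_mult norm_power)
    also have "\<dots> \<le> cmod (g p - f p)"
      using g_le by (intro mult_left_le_one_le) (auto simp: power_le_one)
    finally have h_le: "(cmod (h (p ^ Suc k)))\<^sup>2 \<le> A" unfolding A_def by (intro power_mono) auto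
    have "(cmod (h (p ^ Suc k)))\<^sup>2 / real (p ^ Suc k) powr \<beta> = (cmod (h (p ^ Suc k)))\<^sup>2 * q ^ Suc k"
      by (simp only: p_powr) (simp add: q_def power_one_over)
    also have "\<dots> \<le> A * q ^ Suc k"
      using h_le q(1) by (intro mult_right_mono) auto
    finally show ?thesis .
  qed
  then have sum_le: "(\<Sum>k\<le>N. (cmod (h (p ^ k)))\<^sup>2 / real (p ^ k) powr \<beta>) \<le> 1 + A * q / (1 - q0)"
    using q h1 by (intro sum_le_one_plus_geometric) (auto simp: A_def)
  have "A * q \<le> 2 * (1 - Re (f p * cnj (g p))) * q"
    using cmod_diff_squared_le[OF f_le g_le] q(1) by (intro mult_right_mono) (simp_all add: A_def)
  also have "\<dots> = 2 * pretent_term \<beta> f g p"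
    by (simp add: pretent_term_def q_def)
  finally have "A * q / (1 - q0) \<le> 2 / (1 - q0) * pretent_term \<beta> f g p"
    using divide_right_mono[of "A * q" _ "1 - q0"] q(3) by simp
  with sum_le show ?thesis unfolding q0_def by linarith
qed

theorem lemma2:
  fixes f g h :: "nat \<Rightarrow> complex" and \<beta> :: real
  assumes "completely_multiplicative f" and "completely_multiplicative g"
    and "\<And>n. n > 0 \<Longrightarrow> cmod (f n) \<le> 1"
    and "\<And>n. n > 0 \<Longrightarrow> cmod (g n) \<le> 1"
    and "\<beta> > 0"
    and "pretent_dist_finite \<beta> f g"
    and "\<And>n. n > 0 \<Longrightarrow> g n = dirichlet_conv f h n"
  shows "(\<lambda>n. (cmod (h n))^2 / real n powr \<beta>) summable_on {1..}"
proof (rule multiplicative_summable_on_if_euler_factors_bounded)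
  note cf = assms(1) and cg = assms(2)
  note f_mult = completely_multiplicative_1[OF cf] completely_multiplicative_mult_coprime[OF cf]
  note g_mult = completely_multiplicative_1[OF cg] completely_multiplicative_mult_coprime[OF cg]
  have f_le: "cmod (f p) \<le> 1" and g_le: "cmod (g p) \<le> 1" if "prime p" for p
    using assms(3,4) that prime_gt_0_nat by blast+
  define C where "C = 2 / (1 - 1 / 2 powr \<beta>)"
  have "C \<ge> 0"
    using powr_less_mono2[OF assms(5), of 1 2] by (simp add: C_def field_simps)
  show "(cmod (h 1))\<^sup>2 / real 1 powr \<beta> = 1"
    using dirichlet_quotient_one[of f g h, OF f_mult(1) g_mult(1)] assms(7)[of 1] by simp
  show "(cmod (h (a * b)))\<^sup>2 / real (a * b) powr \<beta>
      = (cmod (h a))\<^sup>2 / real a powr \<beta> * ((cmod (h b))\<^sup>2 / real b powr \<beta>)" if "coprime a b" for a b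
    using dirichlet_quotient_multiplicative[OF f_mult g_mult assms(7) that]
    by (simp add: norm_mult power_mult_distrib powr_mult)
  show "(\<Sum>k\<le>N. (cmod (h (p ^ k)))\<^sup>2 / real (p ^ k) powr \<beta>) \<le> 1 + C * pretent_term \<beta> f g p"
    if "prime p" for p N
    unfolding C_def using f_le[OF that] g_le[OF that]
    by (rule dirichlet_quotient_euler_factor_le[OF cf cg _ _ assms(5,7) that])
  show "C * pretent_term \<beta> f g p \<ge> 0" if "prime p" for p
    using \<open>C \<ge> 0\<close> f_le[OF that] g_le[OF that] by (simp add: pretent_term_nonneg)
  show "(\<lambda>p. C * pretent_term \<beta> f g p) summable_on {p. prime p}"
    using assms(6) by (simp add: pretent_dist_finite_def summable_on_cmult_right)
qed simp

end
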